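(* Let $d\ge1$, let $y=(y_S)_{S\in\mathcal{V}_{n,2d}}$ be a vector over $\mathbb{F}_q$, and let $0\le e\le d-1$ with $r_e=r_{e+1}>0$. Let $f_1,\dots,f_m$ be polynomials $f_\ell(x)=\sum_{U\in\mathcal{V}_{n,2}}c_{\ell,U}x^U$ with $c_{\ell,U}\in\mathbb{F}_q$, and suppose $y$ satisfies $\sum_{U\in\mathcal{V}_{n,2}}c_{\ell,U}y_{U\cup W}=0$ for every $\ell\in[m]$ and every $W\in\mathcal{V}_{n,2d-2}$. Then there are linear maps $T_1,\dots,T_n:C_e\to C_e$ such that: (i) $T_i^2=T_i$ for every $i$; (ii) $T_iT_j=T_jT_i$ for all $i,j$; (iii) for every $\ell\in[m]$, $\sum_{U\in\mathcal{V}_{n,2}}c_{\ell,U}T_U=0$ as a linear map on $C_e$, where $T_U:=\prod_{i\in U}T_i$ and $T_\emptyset$ is the identity.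
   Context: $\mathbb{F}_q$ is a finite field. $\mathcal{V}_{n,j}:=\{S\subseteq\{1,\dots,n\}:0\le|S|\le j\}$ (including $\emptyset$); $x^U:=\prod_{i\in U}x_i$, $x^\emptyset=1$. For $0\le e\le d$, $H_e(y)$ is the matrix with rows and columns indexed by $\mathcal{V}_{n,e}$ and $(S,T)$ entry $y_{S\cup T}$; $r_e:=\operatorname{rank}H_e(y)$; $C_e$ is the column space of $H_e(y)$. *)

theory Defs
  imports Complex_Main "HOL-Library.Function_Algebras"
begin

text \<open>Vectors indexed by subsets of {1..n} are represented as functions
  nat set => 'a, vanishing outside the relevant index set.\<close>

definition fscale :: "'a::field \<Rightarrow> (nat set \<Rightarrow> 'a) \<Rightarrow> (nat set \<Rightarrow> 'a)" where
  "fscale c v = (\<lambda>S. c * v S)"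

lemma vector_space_fscale: "vector_space fscale"
  by unfold_locales (auto simp: fscale_def fun_eq_iff algebra_simps)

definition Vset :: "nat \<Rightarrow> nat \<Rightarrow> nat set set" where
  "Vset n j = {S. S \<subseteq> {1..n} \<and> card S \<le> j}"

text \<open>Column T of H_e(y): the vector (y (S \<union> T)) indexed by S in V n e.\<close>
definition Hcol :: "nat \<Rightarrow> nat \<Rightarrow> (nat set \<Rightarrow> 'a::field) \<Rightarrow> nat set \<Rightarrow> (nat set \<Rightarrow> 'a)" where
  "Hcol n e y T = (\<lambda>S. if S \<in> Vset n e then y (S \<union> T) else 0)"

definition colspace :: "nat \<Rightarrow> nat \<Rightarrow> (nat set \<Rightarrow> 'a::field) \<Rightarrow> (nat set \<Rightarrow> 'a) set" where
  "colspace n e y = module.span fscale (Hcol n e y ` Vset n e)"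

definition rankH :: "nat \<Rightarrow> nat \<Rightarrow> (nat set \<Rightarrow> 'a::field) \<Rightarrow> nat" where
  "rankH n e y = vector_space.dim fscale (colspace n e y)"

definition TU :: "(nat \<Rightarrow> 'b \<Rightarrow> 'b) \<Rightarrow> nat set \<Rightarrow> 'b \<Rightarrow> 'b" where
  "TU T U = foldr (\<circ>) (map T (sorted_list_of_set U)) id"

end

theory Submission
  imports Defs
begin

text \<open>Since r_e = r_(e+1), deleting the rows outside V_(n,e) maps C_(e+1) isomorphically onto
  C_e, and C_(e+1) is already spanned by its columns indexed by V_(n,e). Lifting a vector of C_e
  back to C_(e+1) and then reading off the rows S \<union> {i} gives a linear map T_i that sends the
  column T of H_e(y) to the column T \<union> {i} whenever |T| \<le> e + 1. Idempotence, commutativity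
  and the relations then only have to be checked on the columns of H_e(y), where they reduce to
  T \<union> {i} \<union> {i} = T \<union> {i}, commutativity of union, and the relations satisfied by y.\<close>

interpretation V: vector_space "fscale :: 'a::field \<Rightarrow> (nat set \<Rightarrow> 'a) \<Rightarrow> _"
  by (rule vector_space_fscale)

interpretation V: vector_space_pair "fscale :: 'a::field \<Rightarrow> (nat set \<Rightarrow> 'a) \<Rightarrow> _" fscale
  by unfold_locales

lemma (in vector_space) span_eq_if_independent_card_ge_dim:
  assumes "finite G" "B \<subseteq> span G" "independent B" "dim G \<le> card B"
  shows "span B = span G"
proof (rule ccontr)
  assume "span B \<noteq> span G"
  moreover have "span B \<subseteq> span G"
    using assms(2) subspace_span by (rule span_minimal)
  ultimately have "\<not> G \<subseteq> span B"
    using span_minimal[OF _ subspace_span, of G B] by blast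
  then obtain a where a: "a \<in> G" "a \<notin> span B"
    by blast
  obtain K where K: "K \<subseteq> G" "independent K" "G \<subseteq> span K" "card K = dim G"
    by (rule basis_exists)
  have ind: "independent (insert a B)"
    using a(2) assms(3) by (rule independent_insertI)
  have sub: "insert a B \<subseteq> span K"
    using a(1) assms(2) K(3) span_minimal[OF K(3) subspace_span] by blast
  have "finite (insert a B) \<and> card (insert a B) \<le> card K"
    using finite_subset[OF K(1) assms(1)] ind sub by (rule independent_span_bound)
  moreover have "a \<notin> B"
    using a(2) span_base by blast
  ultimately show False
    using K(4) assms(4) by (auto simp: card_insert_if)
qed

lemma (in vector_space_pair) independent_if_independent_image:
  assumes "Vector_Spaces.linear s1 s2 f" "vs2.independent (f ` B)" "inj_on f B"
  shows "vs1.independent B"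
proof
  assume "vs1.dependent B"
  then obtain a where a: "a \<in> B" "a \<in> vs1.span (B - {a})"
    unfolding vs1.dependent_def by blast
  then have "f a \<in> vs2.span (f ` (B - {a}))"
    using linear_span_image[OF assms(1)] by blast
  also have "f ` (B - {a}) = f ` B - {f a}"
    using inj_on_image_set_diff[OF assms(3), of B "{a}"] a(1) by auto
  finally show False
    using assms(2) a(1) unfolding vs2.dependent_def by blast
qed

lemma (in vector_space_pair) span_eq_inj_on_if_dim_le_dim_image:
  assumes f: "Vector_Spaces.linear s1 s2 f" and "finite G" "G0 \<subseteq> G"
    and dim: "vs1.dim G \<le> vs2.dim (f ` G0)"
  shows "vs1.span G0 = vs1.span G" "inj_on f (vs1.span G)"
proof -
  obtain K where K: "K \<subseteq> f ` G0" "vs2.independent K" "f ` G0 \<subseteq> vs2.span K"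
    by (rule vs2.maximal_independent_subset)
  obtain B where B: "B \<subseteq> G0" "inj_on f B" "K = f ` B"
    using K(1) by (auto simp: subset_image_inj)
  have "vs1.independent B"
    using f K(2)[unfolded B(3)] B(2) by (rule independent_if_independent_image)
  moreover have "vs1.dim G \<le> card B"
    using dim vs2.basis_card_eq_dim[OF K(1,3,2)] card_image[OF B(2)] B(3) by simp
  moreover have "B \<subseteq> vs1.span G"
    using B(1) assms(3) vs1.span_superset by blast
  ultimately have span_B: "vs1.span B = vs1.span G"
    using vs1.span_eq_if_independent_card_ge_dim[OF assms(2)] by blast
  then show "vs1.span G0 = vs1.span G"
    using vs1.span_mono[OF B(1)] vs1.span_mono[OF assms(3)] by blast
  show "inj_on f (vs1.span G)"
    using linear_inj_on_span_independent_image[OF f] K(2) B(2,3) span_B by metis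
qed

lemma sum_apply: "(\<Sum>a\<in>A. f a) x = (\<Sum>a\<in>A. f a x)"
  by (induction A rule: infinite_finite_induct) auto

lemma finite_Vset: "finite (Vset n k)"
  unfolding Vset_def by (rule finite_subset[of _ "Pow {1..n}"]) auto

lemma Vset_mono: "j \<le> k \<Longrightarrow> Vset n j \<subseteq> Vset n k"
  unfolding Vset_def by auto

lemma insert_in_Vset: "S \<in> Vset n k \<Longrightarrow> i \<in> {1..n} \<Longrightarrow> insert i S \<in> Vset n (Suc k)"
  unfolding Vset_def by (auto simp: card_insert_if finite_subset)

lemma Un_in_Vset: "S \<in> Vset n j \<Longrightarrow> T \<in> Vset n k \<Longrightarrow> S \<union> T \<in> Vset n (j + k)"
  unfolding Vset_def using card_Un_le[of S T] by auto

definition restrict_rows :: "nat \<Rightarrow> nat \<Rightarrow> (nat set \<Rightarrow> 'a::zero) \<Rightarrow> nat set \<Rightarrow> 'a" where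
  "restrict_rows n k w = (\<lambda>S. if S \<in> Vset n k then w S else 0)"

definition shift_rows :: "nat \<Rightarrow> nat \<Rightarrow> nat \<Rightarrow> (nat set \<Rightarrow> 'a::zero) \<Rightarrow> nat set \<Rightarrow> 'a" where
  "shift_rows n k i w = (\<lambda>S. if S \<in> Vset n k then w (insert i S) else 0)"

lemma linear_restrict_rows:
  "Vector_Spaces.linear fscale fscale (restrict_rows n k :: (nat set \<Rightarrow> 'a::field) \<Rightarrow> _)"
  by (rule linear_module_homI, unfold_locales) (auto simp: restrict_rows_def fscale_def)

lemma linear_shift_rows:
  "Vector_Spaces.linear fscale fscale (shift_rows n k i :: (nat set \<Rightarrow> 'a::field) \<Rightarrow> _)"
  by (rule linear_module_homI, unfold_locales) (auto simp: shift_rows_def fscale_def)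

lemma restrict_rows_Hcol: "restrict_rows n e (Hcol n (Suc e) y T) = Hcol n e y T"
  using Vset_mono[of e "Suc e" n] by (auto simp: restrict_rows_def Hcol_def fun_eq_iff)

lemma shift_rows_Hcol:
  "i \<in> {1..n} \<Longrightarrow> shift_rows n e i (Hcol n (Suc e) y T) = Hcol n e y (insert i T)"
  using insert_in_Vset[of _ n e i] by (auto simp: shift_rows_def Hcol_def fun_eq_iff)

lemma colspace_Suc_if_flat:
  fixes y :: "nat set \<Rightarrow> 'a::field"
  assumes "rankH n (Suc e) y \<le> rankH n e y"
  shows "colspace n (Suc e) y = V.span (Hcol n (Suc e) y ` Vset n e)"
    and "inj_on (restrict_rows n e) (colspace n (Suc e) y)"
proof -
  have "restrict_rows n e ` Hcol n (Suc e) y ` Vset n e = Hcol n e y ` Vset n e"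
    by (simp add: image_image restrict_rows_Hcol)
  then have "V.dim (Hcol n (Suc e) y ` Vset n (Suc e))
      \<le> V.dim (restrict_rows n e ` Hcol n (Suc e) y ` Vset n e)"
    using assms by (simp add: rankH_def colspace_def)
  from V.span_eq_inj_on_if_dim_le_dim_image[OF linear_restrict_rows _ _ this]
  show "colspace n (Suc e) y = V.span (Hcol n (Suc e) y ` Vset n e)"
    and "inj_on (restrict_rows n e) (colspace n (Suc e) y)"
    using Vset_mono[of e "Suc e" n] by (auto simp: colspace_def finite_Vset)
qed

lemma Hcol_in_colspace_if_flat:
  fixes y :: "nat set \<Rightarrow> 'a::field"
  assumes "rankH n (Suc e) y \<le> rankH n e y" "S \<in> Vset n (Suc e)"
  shows "Hcol n e y S \<in> colspace n e y"
proof -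
  have "Hcol n (Suc e) y S \<in> colspace n (Suc e) y"
    unfolding colspace_def using assms(2) by (intro V.span_base) auto
  then have "Hcol n (Suc e) y S \<in> V.span (Hcol n (Suc e) y ` Vset n e)"
    using colspace_Suc_if_flat(1)[OF assms(1)] by simp
  then have "restrict_rows n e (Hcol n (Suc e) y S)
      \<in> V.span (restrict_rows n e ` Hcol n (Suc e) y ` Vset n e)"
    using V.linear_span_image[OF linear_restrict_rows] by blast
  then show ?thesis
    by (simp add: restrict_rows_Hcol image_image colspace_def)
qed

lemma (in vector_space) linear_TU:
  "(\<And>i. Vector_Spaces.linear scale scale (T i)) \<Longrightarrow> Vector_Spaces.linear scale scale (TU T U)"
proof -
  assume T: "\<And>i. Vector_Spaces.linear scale scale (T i)"
  have "Vector_Spaces.linear scale scale (foldr (\<circ>) (map T xs) id)" for xs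
  proof (induction xs)
    case (Cons i xs)
    have "foldr (\<circ>) (map T (i # xs)) id = T i \<circ> foldr (\<circ>) (map T xs) id"
      by simp
    then show ?case
      using Vector_Spaces.linear_compose[OF Cons.IH T] by (simp only:)
  qed (simp add: linear_ident)
  then show ?thesis
    unfolding TU_def .
qed

lemma TU_shift:
  assumes shift: "\<And>i S. i \<in> {1..n} \<Longrightarrow> S \<in> Vset n k \<Longrightarrow> T i (h S) = h (insert i S)"
    and "U \<subseteq> {1..n}" "S \<subseteq> {1..n}" "card S + card U \<le> Suc k"
  shows "TU T U (h S) = h (S \<union> U)"
proof -
  have "foldr (\<circ>) (map T xs) id (h S) = h (S \<union> set xs)"
    if "set xs \<subseteq> {1..n}" "card S + length xs \<le> Suc k" for xs
    using that
  proof (induction xs)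
    case (Cons x xs)
    have "card (S \<union> set xs) \<le> k"
      using card_Un_le[of S "set xs"] card_length[of xs] Cons.prems(2) by simp
    then have "S \<union> set xs \<in> Vset n k"
      using Cons.prems(1) assms(3) by (simp add: Vset_def)
    then show ?case
      using Cons shift[of x] by simp
  qed simp
  moreover have "finite U"
    using assms(2) finite_subset by blast
  ultimately show ?thesis
    using assms(2,4) by (simp add: TU_def)
qed

lemma colspace_linear_eqI:
  assumes "Vector_Spaces.linear fscale fscale f" "Vector_Spaces.linear fscale fscale g"
    and "\<And>S. S \<in> Vset n e \<Longrightarrow> f (Hcol n e y S) = g (Hcol n e y S)"
    and "v \<in> colspace n e y"
  shows "f v = g v"
  using V.linear_eq_on[OF assms(1,2)] assms(3,4) unfolding colspace_def by blast

lemma sum_Hcol_eq_0: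
  fixes y :: "nat set \<Rightarrow> 'a::field"
  assumes "\<forall>W\<in>Vset n (2 * e). (\<Sum>U\<in>A. c U * y (U \<union> W)) = 0" "S \<in> Vset n e"
  shows "(\<Sum>U\<in>A. fscale (c U) (Hcol n e y (S \<union> U))) = 0"
proof
  fix R
  show "(\<Sum>U\<in>A. fscale (c U) (Hcol n e y (S \<union> U))) R = 0 R"
  proof (cases "R \<in> Vset n e")
    case True
    then have "R \<union> S \<in> Vset n (2 * e)"
      using Un_in_Vset[OF True assms(2)] by (simp add: mult_2)
    have "R \<union> (S \<union> U) = U \<union> (R \<union> S)" for U
      by blast
    then show ?thesis
      using assms(1) \<open>R \<union> S \<in> Vset n (2 * e)\<close> True by (simp add: sum_apply fscale_def Hcol_def)
  qed (simp add: sum_apply fscale_def Hcol_def)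
qed

locale shift_operators =
  fixes n e :: nat and y :: "nat set \<Rightarrow> 'a::field"
    and T :: "nat \<Rightarrow> (nat set \<Rightarrow> 'a) \<Rightarrow> nat set \<Rightarrow> 'a"
  assumes linear_T: "Vector_Spaces.linear fscale fscale (T i)"
    and T_Hcol: "i \<in> {1..n} \<Longrightarrow> S \<in> Vset n (Suc e) \<Longrightarrow>
      T i (Hcol n e y S) = Hcol n e y (insert i S)"
    and Hcol_in_colspace: "S \<in> Vset n (Suc e) \<Longrightarrow> Hcol n e y S \<in> colspace n e y"

lemma ex_shift_operators:
  fixes y :: "nat set \<Rightarrow> 'a::field"
  assumes flat: "rankH n (Suc e) y \<le> rankH n e y"
  shows "\<exists>T. shift_operators n e y T"
proof -
  obtain L where L: "Vector_Spaces.linear fscale fscale L"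
    "\<And>w. w \<in> colspace n (Suc e) y \<Longrightarrow> L (restrict_rows n e w) = w"
    using V.linear_inj_on_left_inverse[OF linear_restrict_rows
        colspace_Suc_if_flat(2)[OF flat, unfolded colspace_def]]
    unfolding colspace_def by blast
  define T where "T i = shift_rows n e i \<circ> L" for i
  have "T i (Hcol n e y S) = Hcol n e y (insert i S)" if "i \<in> {1..n}" "S \<in> Vset n (Suc e)" for i S
  proof -
    have "Hcol n (Suc e) y S \<in> colspace n (Suc e) y"
      unfolding colspace_def using that(2) by (intro V.span_base) auto
    then have "L (Hcol n e y S) = Hcol n (Suc e) y S"
      using L(2) restrict_rows_Hcol by metis
    then show ?thesis
      using shift_rows_Hcol[OF that(1)] by (simp add: T_def)
  qed
  moreover have "Vector_Spaces.linear fscale fscale (T i)" for i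
    unfolding T_def using L(1) linear_shift_rows by (rule Vector_Spaces.linear_compose)
  ultimately have "shift_operators n e y T"
    using Hcol_in_colspace_if_flat[OF flat] unfolding shift_operators_def by blast
  then show ?thesis by blast
qed

context shift_operators
begin

lemma T_colspace:
  assumes "i \<in> {1..n}" "v \<in> colspace n e y"
  shows "T i v \<in> colspace n e y"
proof -
  have "T i ` Hcol n e y ` Vset n e \<subseteq> colspace n e y"
    using T_Hcol[OF assms(1)] Hcol_in_colspace insert_in_Vset[OF _ assms(1)]
      Vset_mono[of e "Suc e" n] by auto
  then have "V.span (T i ` Hcol n e y ` Vset n e) \<subseteq> colspace n e y"
    unfolding colspace_def by (simp add: V.span_minimal)
  then show ?thesis
    using V.linear_span_image[OF linear_T] assms(2) unfolding colspace_def by blast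
qed

lemma T_idem:
  assumes "i \<in> {1..n}" "v \<in> colspace n e y"
  shows "T i (T i v) = T i v"
proof -
  have "(T i \<circ> T i) v = T i v"
  proof (rule colspace_linear_eqI[OF _ linear_T _ assms(2)])
    show "Vector_Spaces.linear fscale fscale (T i \<circ> T i)"
      using linear_T linear_T by (rule Vector_Spaces.linear_compose)
    fix S assume "S \<in> Vset n e"
    then show "(T i \<circ> T i) (Hcol n e y S) = T i (Hcol n e y S)"
      using T_Hcol[OF assms(1)] insert_in_Vset[OF _ assms(1)] Vset_mono[of e "Suc e" n] by auto
  qed
  then show ?thesis by simp
qed

lemma T_commute:
  assumes "i \<in> {1..n}" "j \<in> {1..n}" "v \<in> colspace n e y"
  shows "T i (T j v) = T j (T i v)"
proof -
  have "(T i \<circ> T j) v = (T j \<circ> T i) v"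
  proof (rule colspace_linear_eqI[OF _ _ _ assms(3)])
    show "Vector_Spaces.linear fscale fscale (T i \<circ> T j)"
      and "Vector_Spaces.linear fscale fscale (T j \<circ> T i)"
      using linear_T linear_T by (rule Vector_Spaces.linear_compose)+
    fix S assume "S \<in> Vset n e"
    then show "(T i \<circ> T j) (Hcol n e y S) = (T j \<circ> T i) (Hcol n e y S)"
      using T_Hcol assms(1,2) insert_in_Vset[OF _ assms(1)] insert_in_Vset[OF _ assms(2)]
        Vset_mono[of e "Suc e" n] by (auto simp: insert_commute)
  qed
  then show ?thesis by simp
qed

lemma TU_relation:
  assumes "A \<subseteq> Vset n 2" "\<forall>W\<in>Vset n (2 * e). (\<Sum>U\<in>A. c U * y (U \<union> W)) = 0"
    and "v \<in> colspace n e y"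
  shows "(\<Sum>U\<in>A. fscale (c U) (TU T U v)) = 0"
proof (rule colspace_linear_eqI[OF _ _ _ assms(3)])
  show "Vector_Spaces.linear fscale fscale (\<lambda>v. \<Sum>U\<in>A. fscale (c U) (TU T U v))"
    by (intro V.linear_compose_sum ballI V.linear_compose_scale_right V.linear_TU linear_T)
  show "Vector_Spaces.linear fscale fscale (\<lambda>_. 0)"
    by (rule V.linear_zero)
  fix S assume S: "S \<in> Vset n e"
  have "TU T U (Hcol n e y S) = Hcol n e y (S \<union> U)" if "U \<in> A" for U
    using TU_shift[where h = "Hcol n e y" and n = n and k = "Suc e", OF T_Hcol] S assms(1) that
    by (auto simp: Vset_def)
  then show "(\<Sum>U\<in>A. fscale (c U) (TU T U (Hcol n e y S))) = 0"
    using sum_Hcol_eq_0[OF assms(2) S] by simp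
qed

end

theorem lemma4p5:
  fixes n d e m :: nat
    and y :: "nat set \<Rightarrow> 'a::{field,finite}"
    and c :: "nat \<Rightarrow> nat set \<Rightarrow> 'a"
  assumes "d \<ge> 1"
    and "e \<le> d - 1"
    and "rankH n e y = rankH n (e + 1) y"
    and "rankH n e y > 0"
    and "\<forall>l\<in>{1..m}. \<forall>W\<in>Vset n (2*d - 2).
           (\<Sum>U\<in>Vset n 2. c l U * y (U \<union> W)) = 0"
  shows "\<exists>T :: nat \<Rightarrow> (nat set \<Rightarrow> 'a) \<Rightarrow> (nat set \<Rightarrow> 'a).
           (\<forall>i\<in>{1..n}. (\<forall>v\<in>colspace n e y. T i v \<in> colspace n e y)
              \<and> (\<forall>u\<in>colspace n e y. \<forall>v\<in>colspace n e y. T i (u + v) = T i u + T i v)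
              \<and> (\<forall>a. \<forall>v\<in>colspace n e y. T i (fscale a v) = fscale a (T i v)))
         \<and> (\<forall>i\<in>{1..n}. \<forall>v\<in>colspace n e y. T i (T i v) = T i v)
         \<and> (\<forall>i\<in>{1..n}. \<forall>j\<in>{1..n}. \<forall>v\<in>colspace n e y. T i (T j v) = T j (T i v))
         \<and> (\<forall>l\<in>{1..m}. \<forall>v\<in>colspace n e y.
              (\<Sum>U\<in>Vset n 2. fscale (c l U) (TU T U v)) = 0)"
proof -
  have flat: "rankH n (Suc e) y \<le> rankH n e y"
    using assms(3) by simp
  obtain T where "shift_operators n e y T"
    using ex_shift_operators[OF flat] by blast
  then interpret shift_operators n e y T .
  have "Vset n (2 * e) \<subseteq> Vset n (2 * d - 2)"
    using assms(1,2) by (intro Vset_mono) simp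
  then have relations: "\<forall>W\<in>Vset n (2 * e). (\<Sum>U\<in>Vset n 2. c l U * y (U \<union> W)) = 0"
    if "l \<in> {1..m}" for l
    using assms(5) that by blast
  show ?thesis
    by (intro exI[of _ T] conjI ballI allI T_colspace T_idem T_commute
        TU_relation[OF subset_refl relations] V.linear_add[OF linear_T] V.linear_scale[OF linear_T])
qed

end
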